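(* Let $0\le q\in L_1^{loc}(\mathbb{R})$ with $\int_{-\infty}^{\infty}q(t)\,dt=\infty$, and for $x\in\mathbb{R}$ let $d(x)=\inf\{d>0:\int_{x-d}^{x+d}q(t)\,dt=2\}$. Then the condition $$\lim_{|x|\to\infty}\int_{x-a}^{x+a}q(t)\,dt=\infty\quad\text{for all }a\in(0,\infty)$$ is equivalent to the condition $\lim_{|x|\to\infty}d(x)=0$. *)

theory Defs
  imports "HOL-Analysis.Analysis"
begin

definition dfun :: "(real \<Rightarrow> real) \<Rightarrow> real \<Rightarrow> real" where
  "dfun q x = Inf {d. d > 0 \<and> (LINT t:{x-d..x+d}|lborel. q t) = 2}"

end

theory Submission
  imports Defs
begin

text \<open>Write \<open>W x a\<close> for the integral of \<open>q\<close> over the window \<open>[x - a, x + a]\<close>. Since \<open>a \<mapsto> W x a\<close>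
  is continuous, increasing and unbounded, \<open>d(x) < \<delta>\<close> holds exactly when \<open>W x \<delta> \<ge> 2\<close> (up to the
  boundary case), so \<open>d(x) \<rightarrow> 0\<close> says that every window of fixed width eventually carries mass at
  least 2. Conversely, a window of half-width \<open>a\<close> is tiled by \<open>N\<close> windows of half-width \<open>a / N\<close>,
  so it eventually carries mass at least \<open>2 N\<close> for every \<open>N\<close>.\<close>

lemma integral_split_equal_pieces:
  fixes f :: "real \<Rightarrow> 'b::banach"
  assumes f: "\<And>a b. f integrable_on {a..b}" and "h \<ge> 0"
  shows "integral {c..c + real m * h} f = (\<Sum>k<m. integral {c + real k * h..c + real (Suc k) * h} f)"
proof (induction m)
  case 0
  then show ?case by simp
next
  case (Suc m)
  have "integral {c..c + real (Suc m) * h} f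
      = integral {c..c + real m * h} f + integral {c + real m * h..c + real (Suc m) * h} f"
    using \<open>h \<ge> 0\<close> f
    by (intro Henstock_Kurzweil_Integration.integral_combine[symmetric]) (auto simp: distrib_right)
  with Suc.IH show ?case by simp
qed

lemma continuous_on_integral_window:
  fixes q :: "real \<Rightarrow> real"
  assumes q: "\<And>a b. q integrable_on {a..b}"
  shows "continuous_on {0..D} (\<lambda>d. integral {x-d..x+d} q)"
proof -
  define P where "P u = integral {x-D..u} q" for u
  have P: "continuous_on {x-D..x+D} P"
    unfolding P_def by (rule indefinite_integral_continuous_1[OF q])
  have eq: "integral {x-d..x+d} q = P (x+d) - P (x-d)" if "d \<in> {0..D}" for d
    using that q unfolding P_def
    by (simp add: Henstock_Kurzweil_Integration.integral_combine[of "x-D" "x-d" "x+d", symmetric])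
  have "continuous_on {0..D} (\<lambda>d. P (x+d) - P (x-d))"
    by (intro continuous_on_diff continuous_on_compose2[OF P]) (auto intro!: continuous_intros)
  then show ?thesis
    by (rule continuous_on_eq) (simp add: eq)
qed

lemma integral_window_attains:
  fixes q :: "real \<Rightarrow> real"
  assumes q: "\<And>a b. q integrable_on {a..b}" and "e \<ge> 0"
    and c: "0 < c" "c \<le> integral {x-e..x+e} q"
  obtains d where "0 < d" "d \<le> e" "integral {x-d..x+d} q = c"
proof -
  obtain d where d: "0 \<le> d" "d \<le> e" "integral {x-d..x+d} q = c"
    using IVT'[of "\<lambda>d. integral {x-d..x+d} q" 0 c e] c \<open>e \<ge> 0\<close> continuous_on_integral_window[OF q]
    by auto
  moreover have "d \<noteq> 0"
    using d c by auto
  ultimately show thesis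
    using that[of d] by simp
qed

lemma integral_window_unbounded:
  fixes q :: "real \<Rightarrow> real"
  assumes nonneg: "\<And>t. q t \<ge> 0" and locint: "\<And>a b. set_integrable lborel {a..b} q"
    and infint: "(\<integral>\<^sup>+ t. ennreal (q t) \<partial>lborel) = \<infinity>"
  obtains n :: nat where "c \<le> integral {x - real n..x + real n} q"
proof (rule ccontr)
  assume "\<not> thesis"
  with that have small: "integral {x - real n..x + real n} q \<le> c" for n
    by (meson not_le less_imp_le)
  define f where "f = (\<lambda>n t. ennreal (indicator {x - real n..x + real n} t * q t))"
  have inc: "incseq f"
    unfolding f_def incseq_def le_fun_def
    by (auto intro!: ennreal_leI mult_right_mono simp: indicator_def nonneg)
  have meas: "f n \<in> borel_measurable lborel" for n
    unfolding f_def using borel_measurable_integrable[OF locint[unfolded set_integrable_def]] by auto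
  have sup: "(SUP n. f n t) = ennreal (q t)" for t
  proof (rule antisym)
    show "(SUP n. f n t) \<le> ennreal (q t)"
      by (rule SUP_least) (auto simp: f_def indicator_def nonneg)
    have "f (nat \<lceil>\<bar>t - x\<bar>\<rceil>) t = ennreal (q t)"
      unfolding f_def by (auto simp: indicator_def abs_le_iff, linarith+)
    then show "ennreal (q t) \<le> (SUP n. f n t)"
      by (metis SUP_upper UNIV_I)
  qed
  have fn: "integral\<^sup>N lborel (f n) = ennreal (integral {x - real n..x + real n} q)" for n
    using nn_integral_eq_integral[OF locint[unfolded set_integrable_def]] nonneg
      set_borel_integral_eq_integral(2)[OF locint]
    by (simp add: f_def set_lebesgue_integral_def)
  have "(\<integral>\<^sup>+ t. ennreal (q t) \<partial>lborel) = (SUP n. integral\<^sup>N lborel (f n))"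
    using nn_integral_monotone_convergence_SUP[OF inc meas] sup by simp
  also have "\<dots> \<le> ennreal c"
    using small by (auto simp: fn intro!: SUP_least ennreal_leI)
  finally have "(\<integral>\<^sup>+ t. ennreal (q t) \<partial>lborel) \<le> ennreal c" .
  with infint show False
    by (simp add: top_unique)
qed

lemma dfun_eq_Inf_integral:
  assumes locint: "\<And>a b. set_integrable lborel {a..b} q"
  shows "dfun q x = Inf {d. d > 0 \<and> integral {x-d..x+d} q = 2}"
  unfolding dfun_def using set_borel_integral_eq_integral(2)[OF locint] by simp

lemma abs_dfun_le_if_integral_window_ge:
  assumes locint: "\<And>a b. set_integrable lborel {a..b} q"
    and "e \<ge> 0" and "2 \<le> integral {x-e..x+e} q"
  shows "\<bar>dfun q x\<bar> \<le> e"
proof -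
  let ?S = "{d. d > 0 \<and> integral {x-d..x+d} q = 2}"
  have q: "\<And>a b. q integrable_on {a..b}"
    using set_borel_integral_eq_integral(1)[OF locint] by blast
  obtain d where d: "d \<in> ?S" "d \<le> e"
    using integral_window_attains[OF q assms(2) _ assms(3)] by auto
  have bdd: "bdd_below ?S"
    by (auto intro: bdd_belowI[of _ 0])
  have "0 \<le> Inf ?S"
    using d by (intro cInf_greatest) auto
  moreover have "Inf ?S \<le> e"
    by (rule cInf_lower2[OF d(1) d(2) bdd])
  ultimately show ?thesis
    by (simp add: dfun_eq_Inf_integral[OF locint])
qed

text \<open>The hypothesis \<open>infint\<close> makes the level set defining \<open>dfun q x\<close> nonempty; the infimum of the
  empty set of reals is unspecified.\<close>

lemma integral_window_ge_if_dfun_less: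
  fixes q :: "real \<Rightarrow> real"
  assumes nonneg: "\<And>t. q t \<ge> 0" and locint: "\<And>a b. set_integrable lborel {a..b} q"
    and infint: "(\<integral>\<^sup>+ t. ennreal (q t) \<partial>lborel) = \<infinity>"
    and less: "dfun q x < \<delta>"
  shows "2 \<le> integral {x-\<delta>..x+\<delta>} q"
proof -
  let ?S = "{d. d > 0 \<and> integral {x-d..x+d} q = 2}"
  have q: "\<And>a b. q integrable_on {a..b}"
    using set_borel_integral_eq_integral(1)[OF locint] by blast
  obtain n :: nat where "2 \<le> integral {x - real n..x + real n} q"
    using integral_window_unbounded[OF nonneg locint infint] .
  then have "?S \<noteq> {}"
    using integral_window_attains[OF q, of "real n" 2 x] by fastforce
  moreover have "bdd_below ?S"
    by (auto intro: bdd_belowI[of _ 0])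
  ultimately have "\<exists>d \<in> ?S. d < \<delta>"
    using less by (simp add: cInf_less_iff dfun_eq_Inf_integral[OF locint])
  then obtain d where d: "d > 0" "integral {x-d..x+d} q = 2" "d < \<delta>"
    by blast
  have "integral {x-d..x+d} q \<le> integral {x-\<delta>..x+\<delta>} q"
    using d q nonneg by (intro integral_subset_le) auto
  with d show ?thesis
    by simp
qed

lemma tendsto_dfun_zero_if_integral_windows_at_top:
  assumes locint: "\<And>a b. set_integrable lborel {a..b} q"
    and windows: "\<And>a. a > 0 \<Longrightarrow> filterlim (\<lambda>x. integral {x-a..x+a} q) at_top at_infinity"
  shows "(dfun q \<longlongrightarrow> 0) at_infinity"
proof (rule tendstoI)
  fix e :: real
  assume "e > 0"
  then have "\<forall>\<^sub>F x in at_infinity. 2 \<le> integral {x - e/2..x + e/2} q"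
    using windows[of "e/2"] by (simp add: filterlim_at_top)
  then show "\<forall>\<^sub>F x in at_infinity. dist (dfun q x) 0 < e"
    by eventually_elim
      (use \<open>e > 0\<close> abs_dfun_le_if_integral_window_ge[OF locint, of "e/2"] in fastforce)
qed

lemma integral_windows_at_top_if_tendsto_dfun_zero:
  fixes q :: "real \<Rightarrow> real"
  assumes nonneg: "\<And>t. q t \<ge> 0" and locint: "\<And>a b. set_integrable lborel {a..b} q"
    and infint: "(\<integral>\<^sup>+ t. ennreal (q t) \<partial>lborel) = \<infinity>"
    and dfun: "(dfun q \<longlongrightarrow> 0) at_infinity" and "a > 0"
  shows "filterlim (\<lambda>x. integral {x-a..x+a} q) at_top at_infinity"
  unfolding filterlim_at_top
proof
  fix Z :: real
  define N where "N = nat \<lceil>Z\<rceil> + 1"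
  define \<delta> where "\<delta> = a / real N"
  have "N > 0" "Z \<le> real N"
    unfolding N_def using real_nat_ceiling_ge[of Z] by auto
  then have "\<delta> > 0" and width: "real N * (2 * \<delta>) = 2 * a"
    unfolding \<delta>_def using \<open>a > 0\<close> by auto
  have q: "\<And>a b. q integrable_on {a..b}"
    using set_borel_integral_eq_integral(1)[OF locint] by blast
  obtain R where R: "\<And>y. R \<le> norm y \<Longrightarrow> dist (dfun q y) 0 < \<delta>"
    using tendstoD[OF dfun \<open>\<delta> > 0\<close>] unfolding eventually_at_infinity by blast
  show "\<forall>\<^sub>F x in at_infinity. Z \<le> integral {x-a..x+a} q"
    unfolding eventually_at_infinity
  proof (intro exI allI impI)
    fix x :: real
    assume x: "R + a \<le> norm x"
    have piece: "2 \<le> integral {x - a + real k * (2 * \<delta>)..x - a + real (Suc k) * (2 * \<delta>)} q"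
      if "k < N" for k
    proof -
      define y where "y = x - a + (2 * real k + 1) * \<delta>"
      have "(2 * real k + 1) * \<delta> \<le> (2 * real N) * \<delta>"
        using that \<open>\<delta> > 0\<close> by (intro mult_right_mono) auto
      also have "\<dots> = 2 * a"
        using width by simp
      finally have "(2 * real k + 1) * \<delta> \<le> 2 * a" .
      moreover have "0 \<le> (2 * real k + 1) * \<delta>"
        using \<open>\<delta> > 0\<close> by simp
      ultimately have "R \<le> norm y"
        using x unfolding y_def by (auto simp: abs_if split: if_split_asm)
      then have "2 \<le> integral {y-\<delta>..y+\<delta>} q"
        using R integral_window_ge_if_dfun_less[OF nonneg locint infint] by (simp add: abs_less_iff)
      then show ?thesis
        unfolding y_def by (simp add: algebra_simps)
    qed
    have "Z \<le> (\<Sum>k<N. 2)"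
      using \<open>Z \<le> real N\<close> of_nat_0_le_iff[of N] by simp
    also have "\<dots> \<le> (\<Sum>k<N. integral {x - a + real k * (2 * \<delta>)..x - a + real (Suc k) * (2 * \<delta>)} q)"
      using piece by (intro sum_mono) simp
    also have "\<dots> = integral {x-a..x+a} q"
      using integral_split_equal_pieces[OF q, of "2 * \<delta>" "x - a" N] \<open>\<delta> > 0\<close> width by (simp add: add.commute)
    finally show "Z \<le> integral {x-a..x+a} q" .
  qed
qed

theorem lemma1p1:
  fixes q :: "real \<Rightarrow> real"
  assumes nonneg: "\<And>t. q t \<ge> 0"
    and locint: "\<And>a b. set_integrable lborel {a..b} q"
    and infint: "(\<integral>\<^sup>+ t. ennreal (q t) \<partial>lborel) = \<infinity>"
  shows "(\<forall>a>0. filterlim (\<lambda>x. LINT t:{x-a..x+a}|lborel. q t) at_top at_infinity)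
     \<longleftrightarrow> (dfun q \<longlongrightarrow> 0) at_infinity"
  using tendsto_dfun_zero_if_integral_windows_at_top[OF locint]
    integral_windows_at_top_if_tendsto_dfun_zero[OF nonneg locint infint]
  by (auto simp: set_borel_integral_eq_integral(2)[OF locint])

end
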